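(* Let $G$, $\mathrm{b}$, $(w_{ij})$ with all $w_{ij}\le 0$, $H^*$, $U(H^* )$ and $(y^*,\lambda^* )$ be as in the context, and assume the LP relaxation (Primal LP') has no fractional solution. Then for any alternating path $P$ (with respect to $H^*$) whose endpoints belong to $U(H^* )$, there exists an edge $\{i,j\}\in P$ with $|w_{ij}+y_i^*+y_j^*|>0$.
   Context: Let $G=(V,E)$ be a finite undirected simple graph, $V=\{1,\dots,n\}$, with real edge weights $w_{ij}\le0$ and positive integers $b_i\le\deg_G(i)$; $N(i)$ is the neighbour set of $i$. A $\mathrm{b}$-matching is a set of edges in which each vertex $i$ has degree at most $b_i$; $H^*$ is a minimum weight $\mathrm{b}$-matching, and $U(H^* )$ is the set of vertices $i$ with $\deg_{H^*}(i)<b_i$. Primal LP': minimize $\sum w_{ij}x_{ij}$ s.t. $\sum_{j\in N(i)}x_{ij}\le b_i$, $0\le x_{ij}\le1$. Dual LP': maximize $-\sum_ib_iy_i-\sum\lambda_{ij}$ s.t. $w_{ij}+\lambda_{ij}\ge-y_i-y_j$, $\lambda_{ij}\ge0$ (and $y_i\ge0$). "No fractional solution" means every optimal solution of Primal LP' lies in $\{0,1\}^E$. $(y^*,\lambda^* )$ is an optimal solution of Dual LP'. A walk $P=(i_1,\dots,i_k)$ in $G$ is an alternating path (w.r.t. $H^*$) if (a) either all odd edges $\{i_1,i_2\},\{i_3,i_4\},\dots$ are in $H^*$ and all even edges $\{i_2,i_3\},\{i_4,i_5\},\dots$ are not, or vice versa; and (b) $i_r\neq i_{r+1}$ and $i_r\neq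 i_{r+2}$ for $1\le r\le k-2$ (vertices and edges may be revisited but no edge is repeated immediately). *)

theory Defs
  imports Complex_Main
begin

definition vset :: "nat \<Rightarrow> nat set" where
  "vset n = {1..n}"

definition simple_graph :: "nat \<Rightarrow> nat set set \<Rightarrow> bool" where
  "simple_graph n E \<longleftrightarrow> E \<subseteq> {{i, j} | i j. i \<in> vset n \<and> j \<in> vset n \<and> i \<noteq> j}"

definition nbrs :: "nat set set \<Rightarrow> nat \<Rightarrow> nat set" where
  "nbrs E i = {j. {i, j} \<in> E}"

definition deg :: "nat set set \<Rightarrow> nat \<Rightarrow> nat" where
  "deg F i = card {e \<in> F. i \<in> e}"

definition is_bmatching :: "nat \<Rightarrow> nat set set \<Rightarrow> (nat \<Rightarrow> nat) \<Rightarrow> nat set set \<Rightarrow> bool" where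
  "is_bmatching n E b H \<longleftrightarrow> H \<subseteq> E \<and> (\<forall>i \<in> vset n. deg H i \<le> b i)"

definition is_min_bmatching ::
  "nat \<Rightarrow> nat set set \<Rightarrow> (nat \<Rightarrow> nat) \<Rightarrow> (nat set \<Rightarrow> real) \<Rightarrow> nat set set \<Rightarrow> bool" where
  "is_min_bmatching n E b w H \<longleftrightarrow> is_bmatching n E b H \<and>
     (\<forall>M. is_bmatching n E b M \<longrightarrow> (\<Sum>e\<in>H. w e) \<le> (\<Sum>e\<in>M. w e))"

definition unsat :: "nat \<Rightarrow> (nat \<Rightarrow> nat) \<Rightarrow> nat set set \<Rightarrow> nat set" where
  "unsat n b H = {i \<in> vset n. deg H i < b i}"

definition primal_feasible :: "nat \<Rightarrow> nat set set \<Rightarrow> (nat \<Rightarrow> nat) \<Rightarrow> (nat set \<Rightarrow> real) \<Rightarrow> bool" where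
  "primal_feasible n E b x \<longleftrightarrow>
     (\<forall>i \<in> vset n. (\<Sum>j \<in> nbrs E i. x {i, j}) \<le> real (b i)) \<and>
     (\<forall>e \<in> E. 0 \<le> x e \<and> x e \<le> 1)"

definition primal_obj :: "nat set set \<Rightarrow> (nat set \<Rightarrow> real) \<Rightarrow> (nat set \<Rightarrow> real) \<Rightarrow> real" where
  "primal_obj E w x = (\<Sum>e \<in> E. w e * x e)"

definition primal_optimal ::
  "nat \<Rightarrow> nat set set \<Rightarrow> (nat \<Rightarrow> nat) \<Rightarrow> (nat set \<Rightarrow> real) \<Rightarrow> (nat set \<Rightarrow> real) \<Rightarrow> bool" where
  "primal_optimal n E b w x \<longleftrightarrow> primal_feasible n E b x \<and>
     (\<forall>x'. primal_feasible n E b x' \<longrightarrow> primal_obj E w x \<le> primal_obj E w x')"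

definition no_fractional_solution ::
  "nat \<Rightarrow> nat set set \<Rightarrow> (nat \<Rightarrow> nat) \<Rightarrow> (nat set \<Rightarrow> real) \<Rightarrow> bool" where
  "no_fractional_solution n E b w \<longleftrightarrow>
     (\<forall>x. primal_optimal n E b w x \<longrightarrow> (\<forall>e \<in> E. x e = 0 \<or> x e = 1))"

definition dual_feasible ::
  "nat \<Rightarrow> nat set set \<Rightarrow> (nat set \<Rightarrow> real) \<Rightarrow> (nat \<Rightarrow> real) \<Rightarrow> (nat set \<Rightarrow> real) \<Rightarrow> bool" where
  "dual_feasible n E w y lam \<longleftrightarrow>
     (\<forall>i \<in> vset n. 0 \<le> y i) \<and> (\<forall>e \<in> E. 0 \<le> lam e) \<and>
     (\<forall>i j. {i, j} \<in> E \<longrightarrow> w {i, j} + lam {i, j} \<ge> - y i - y j)"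

definition dual_obj ::
  "nat \<Rightarrow> nat set set \<Rightarrow> (nat \<Rightarrow> nat) \<Rightarrow> (nat \<Rightarrow> real) \<Rightarrow> (nat set \<Rightarrow> real) \<Rightarrow> real" where
  "dual_obj n E b y lam = - (\<Sum>i \<in> vset n. real (b i) * y i) - (\<Sum>e \<in> E. lam e)"

definition dual_optimal ::
  "nat \<Rightarrow> nat set set \<Rightarrow> (nat \<Rightarrow> nat) \<Rightarrow> (nat set \<Rightarrow> real) \<Rightarrow> (nat \<Rightarrow> real) \<Rightarrow> (nat set \<Rightarrow> real) \<Rightarrow> bool" where
  "dual_optimal n E b w y lam \<longleftrightarrow> dual_feasible n E w y lam \<and>
     (\<forall>y' lam'. dual_feasible n E w y' lam' \<longrightarrow> dual_obj n E b y' lam' \<le> dual_obj n E b y lam)"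

text \<open>Alternating path (walk) P = [i_1, ..., i_k] in G w.r.t. H; the r-th edge (0-based)
  is {P!r, P!(r+1)}.\<close>

definition alternating_path :: "nat set set \<Rightarrow> nat set set \<Rightarrow> nat list \<Rightarrow> bool" where
  "alternating_path E H P \<longleftrightarrow>
     (\<forall>r. Suc r < length P \<longrightarrow> {P ! r, P ! Suc r} \<in> E) \<and>
     ((\<forall>r. Suc r < length P \<longrightarrow> ({P ! r, P ! Suc r} \<in> H \<longleftrightarrow> even r)) \<or>
      (\<forall>r. Suc r < length P \<longrightarrow> ({P ! r, P ! Suc r} \<in> H \<longleftrightarrow> odd r))) \<and>
     (\<forall>r. Suc r < length P \<longrightarrow> P ! r \<noteq> P ! Suc r) \<and>
     (\<forall>r. Suc (Suc r) < length P \<longrightarrow> P ! r \<noteq> P ! Suc (Suc r))"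

end

theory Submission
  imports Defs
begin

text \<open>Suppose every edge of the alternating path \<open>P\<close> were tight, i.e.\ \<open>w\<^sub>i\<^sub>j + y\<^sup>*\<^sub>i + y\<^sup>*\<^sub>j = 0\<close>.
  By LP duality (proved here from Farkas' lemma) and the absence of fractional optima, the
  incidence vector of \<open>H\<^sup>*\<close> is an optimal solution of LP' whose value equals the dual optimum, so
  complementary slackness forces \<open>y\<^sup>* = 0\<close> at the unsaturated endpoints of \<open>P\<close>. Now shift the
  incidence vector by \<open>\<epsilon>\<close> along \<open>P\<close>, decreasing the edges of \<open>H\<^sup>*\<close> and increasing the others. The
  signs alternate, so interior vertices keep their load and only the endpoints, which have slack,
  change; and the objective changes by a telescoping sum of the tight edge equations, which vanishes
  because \<open>y\<^sup>*\<close> is zero at both ends. For small \<open>\<epsilon>\<close> this is a fractional optimal solution, a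
  contradiction.\<close>

section \<open>Farkas' lemma\<close>

definition dot_on :: "'i set \<Rightarrow> ('i \<Rightarrow> real) \<Rightarrow> ('i \<Rightarrow> real) \<Rightarrow> real" where
  "dot_on I y v = (\<Sum>i\<in>I. y i * v i)"

lemma dot_on_diff_right: "dot_on I y (\<lambda>i. p * u i - q * v i) = p * dot_on I y u - q * dot_on I y v"
  by (simp add: dot_on_def sum_subtractf sum_distrib_left algebra_simps)

lemma dot_on_diff_left: "dot_on I (\<lambda>i. p * y i - q * z i) v = p * dot_on I y v - q * dot_on I z v"
  by (simp add: dot_on_def sum_subtractf sum_distrib_left algebra_simps)

definition in_cone :: "'i set \<Rightarrow> 'k set \<Rightarrow> ('k \<Rightarrow> 'i \<Rightarrow> real) \<Rightarrow> ('i \<Rightarrow> real) \<Rightarrow> bool" where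
  "in_cone I K a b \<longleftrightarrow> (\<exists>l. (\<forall>k\<in>K. 0 \<le> l k) \<and> (\<forall>i\<in>I. b i = (\<Sum>k\<in>K. l k * a k i)))"

definition cone_separable :: "'i set \<Rightarrow> 'k set \<Rightarrow> ('k \<Rightarrow> 'i \<Rightarrow> real) \<Rightarrow> ('i \<Rightarrow> real) \<Rightarrow> bool" where
  "cone_separable I K a b \<longleftrightarrow> (\<exists>y. (\<forall>k\<in>K. 0 \<le> dot_on I y (a k)) \<and> dot_on I y b < 0)"

lemma in_cone_insert:
  assumes "in_cone I K a b" "finite K" "m \<notin> K"
  shows "in_cone I (insert m K) a b"
proof -
  obtain l where l: "\<forall>k\<in>K. 0 \<le> l k" "\<forall>i\<in>I. b i = (\<Sum>k\<in>K. l k * a k i)"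
    using assms(1) unfolding in_cone_def by blast
  have "(\<Sum>k\<in>K. (l(m := 0)) k * a k i) = (\<Sum>k\<in>K. l k * a k i)" for i
    by (rule sum.cong) (use assms(3) in auto)
  then show ?thesis
    unfolding in_cone_def using assms(2,3) l by (intro exI[of _ "l(m := 0)"]) auto
qed

text \<open>The inductive step of Farkas' lemma when \<open>y\<close> separates \<open>b\<close> from the cone of \<open>K\<close> but not
  from the new generator \<open>a m\<close>: project \<open>b\<close> and the generators of \<open>K\<close> along \<open>a m\<close> onto the
  hyperplane \<open>y\<^sup>\<perp>\<close>, and lift whichever alternative holds there.\<close>

lemma in_cone_lift_projection:
  fixes a :: "'k \<Rightarrow> 'i \<Rightarrow> real"
  assumes "finite K" "m \<notin> K"
    and y: "\<forall>k\<in>K. 0 \<le> dot_on I y (a k)" "dot_on I y b < 0" "dot_on I y (a m) < 0"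
    and proj: "in_cone I K (\<lambda>k i. dot_on I y (a k) * a m i - dot_on I y (a m) * a k i)
                            (\<lambda>i. dot_on I y b * a m i - dot_on I y (a m) * b i)"
  shows "in_cone I (insert m K) a b"
proof -
  let ?al = "dot_on I y (a m)"
  obtain l where l: "\<forall>k\<in>K. 0 \<le> l k"
    and l_eq: "\<forall>i\<in>I. dot_on I y b * a m i - ?al * b i
                   = (\<Sum>k\<in>K. l k * (dot_on I y (a k) * a m i - ?al * a k i))"
    using proj unfolding in_cone_def by blast
  define S where "S = (\<Sum>k\<in>K. l k * dot_on I y (a k))"
  have "0 \<le> S" unfolding S_def using l y(1) by (intro sum_nonneg) auto
  define lm where "lm = (dot_on I y b - S) / ?al"
  have "0 \<le> lm" unfolding lm_def using \<open>0 \<le> S\<close> y(2,3) by (intro divide_nonpos_neg) auto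
  have "b i = (\<Sum>k\<in>insert m K. (l(m := lm)) k * a k i)" if "i \<in> I" for i
  proof -
    have "dot_on I y b * a m i - ?al * b i = S * a m i - ?al * (\<Sum>k\<in>K. l k * a k i)"
      using l_eq that unfolding S_def
      by (simp add: sum_subtractf sum_distrib_left sum_distrib_right algebra_simps)
    then have "b i = lm * a m i + (\<Sum>k\<in>K. l k * a k i)"
      unfolding lm_def using y(3) by (simp add: field_simps)
    moreover have "(\<Sum>k\<in>K. (l(m := lm)) k * a k i) = (\<Sum>k\<in>K. l k * a k i)"
      by (rule sum.cong) (use assms(2) in auto)
    ultimately show ?thesis using assms(1,2) by simp
  qed
  then show ?thesis
    unfolding in_cone_def using l \<open>0 \<le> lm\<close> by (intro exI[of _ "l(m := lm)"]) auto
qed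

lemma cone_separable_lift_projection:
  fixes a :: "'k \<Rightarrow> 'i \<Rightarrow> real"
  assumes "dot_on I y (a m) < 0"
    and proj: "cone_separable I K (\<lambda>k i. dot_on I y (a k) * a m i - dot_on I y (a m) * a k i)
                                   (\<lambda>i. dot_on I y b * a m i - dot_on I y (a m) * b i)"
  shows "cone_separable I (insert m K) a b"
proof -
  let ?al = "dot_on I y (a m)"
  obtain z where z: "\<forall>k\<in>K. 0 \<le> dot_on I z (\<lambda>i. dot_on I y (a k) * a m i - ?al * a k i)"
    "dot_on I z (\<lambda>i. dot_on I y b * a m i - ?al * b i) < 0"
    using proj unfolding cone_separable_def by blast
  define y' where "y' = (\<lambda>i. dot_on I z (a m) * y i - ?al * z i)"
  have dot_y': "dot_on I y' v = dot_on I z (a m) * dot_on I y v - ?al * dot_on I z v" for v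
    unfolding y'_def by (rule dot_on_diff_left)
  have "0 \<le> dot_on I y' (a k)" if "k \<in> K" for k
    using z(1) that unfolding dot_y' dot_on_diff_right by (simp add: mult.commute)
  moreover have "0 \<le> dot_on I y' (a m)" by (simp add: dot_y')
  moreover have "dot_on I y' b < 0"
    using z(2) unfolding dot_y' dot_on_diff_right by (simp add: mult.commute)
  ultimately show ?thesis unfolding cone_separable_def by auto
qed

lemma farkas_cone:
  fixes a :: "'k \<Rightarrow> 'i \<Rightarrow> real"
  assumes "finite I" "finite K"
  shows "in_cone I K a b \<or> cone_separable I K a b"
  using assms(2)
proof (induction K arbitrary: a b rule: finite_induct)
  case empty
  show ?case
  proof (cases "\<forall>i\<in>I. b i = 0")
    case False
    then obtain i0 where i0: "i0 \<in> I" "b i0 \<noteq> 0" by auto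
    have "0 < (\<Sum>i\<in>I. b i * b i)"
      by (rule sum_pos2[OF assms(1) i0(1)]) (use i0 in \<open>auto simp: zero_less_mult_iff\<close>)
    then have "dot_on I (\<lambda>i. - b i) b < 0" by (simp add: dot_on_def sum_negf)
    then show ?thesis unfolding cone_separable_def by auto
  qed (simp add: in_cone_def)
next
  case (insert m K)
  from insert.IH[of a b] show ?case
  proof
    assume "in_cone I K a b"
    then show ?thesis by (intro disjI1 in_cone_insert insert.hyps)
  next
    assume "cone_separable I K a b"
    then obtain y where y: "\<forall>k\<in>K. 0 \<le> dot_on I y (a k)" "dot_on I y b < 0"
      unfolding cone_separable_def by blast
    show ?thesis
    proof (cases "0 \<le> dot_on I y (a m)")
      case True
      then show ?thesis using y unfolding cone_separable_def by auto
    next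
      case False
      then have "dot_on I y (a m) < 0" by simp
      let ?a' = "\<lambda>k i. dot_on I y (a k) * a m i - dot_on I y (a m) * a k i"
      let ?b' = "\<lambda>i. dot_on I y b * a m i - dot_on I y (a m) * b i"
      from insert.IH[of ?a' ?b'] show ?thesis
      proof
        assume "in_cone I K ?a' ?b'"
        then show ?thesis
          by (intro disjI1 in_cone_lift_projection[OF insert.hyps y \<open>dot_on I y (a m) < 0\<close>])
      next
        assume "cone_separable I K ?a' ?b'"
        then show ?thesis
          by (intro disjI2 cone_separable_lift_projection[where y = y] \<open>dot_on I y (a m) < 0\<close>)
      qed
    qed
  qed
qed

lemma farkas_inequalities:
  fixes A :: "'k \<Rightarrow> 'i \<Rightarrow> real" and c :: "'k \<Rightarrow> real"
  assumes "finite I" "finite K"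
    and infeasible: "\<not> (\<exists>x. \<forall>k\<in>K. (\<Sum>i\<in>I. A k i * x i) \<le> c k)"
  shows "\<exists>\<mu>. (\<forall>k\<in>K. 0 \<le> \<mu> k) \<and> (\<forall>i\<in>I. (\<Sum>k\<in>K. \<mu> k * A k i) = 0) \<and> (\<Sum>k\<in>K. \<mu> k * c k) < 0"
proof -
  text \<open>Homogenise: the extra coordinate \<open>None\<close> carries the right-hand side.\<close>
  define I' where "I' = insert None (Some ` I)"
  define a where "a = (\<lambda>k j. case j of None \<Rightarrow> c k | Some i \<Rightarrow> A k i)"
  define b :: "'i option \<Rightarrow> real" where "b = (\<lambda>j. case j of None \<Rightarrow> -1 | Some i \<Rightarrow> 0)"
  have "finite I'" using assms(1) by (simp add: I'_def)
  have dot_I': "dot_on I' y v = y None * v None + (\<Sum>i\<in>I. y (Some i) * v (Some i))" for y v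
    unfolding dot_on_def I'_def using assms(1) by (simp add: sum.reindex)
  from farkas_cone[OF \<open>finite I'\<close> assms(2), of a b] show ?thesis
    unfolding in_cone_def cone_separable_def
  proof
    assume "\<exists>l. (\<forall>k\<in>K. 0 \<le> l k) \<and> (\<forall>i\<in>I'. b i = (\<Sum>k\<in>K. l k * a k i))"
    then obtain l where l: "\<forall>k\<in>K. 0 \<le> l k" "\<forall>i\<in>I'. b i = (\<Sum>k\<in>K. l k * a k i)" by blast
    have "\<forall>i\<in>I. (\<Sum>k\<in>K. l k * A k i) = 0"
      using l(2) by (auto simp: a_def b_def I'_def)
    moreover have "(\<Sum>k\<in>K. l k * c k) < 0"
      using l(2) by (auto simp: a_def b_def I'_def)
    ultimately show ?thesis using l(1) by blast
  next
    assume "\<exists>y. (\<forall>k\<in>K. 0 \<le> dot_on I' y (a k)) \<and> dot_on I' y b < 0"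
    then obtain y where y: "\<forall>k\<in>K. 0 \<le> dot_on I' y (a k)" "dot_on I' y b < 0" by blast
    have "0 < y None" using y(2) by (simp add: dot_I' b_def)
    define x where "x = (\<lambda>i. - y (Some i) / y None)"
    have "(\<Sum>i\<in>I. A k i * x i) \<le> c k" if "k \<in> K" for k
    proof -
      have "0 \<le> y None * c k + (\<Sum>i\<in>I. y (Some i) * A k i)"
        using y(1) that by (simp add: dot_I' a_def)
      have "(\<Sum>i\<in>I. A k i * x i) = - (\<Sum>i\<in>I. y (Some i) * A k i) / y None"
        unfolding x_def by (simp add: sum_divide_distrib[symmetric] sum_negf algebra_simps)
      also have "\<dots> \<le> c k"
        using \<open>0 \<le> y None * c k + _\<close> \<open>0 < y None\<close> by (simp add: field_simps)
      finally show ?thesis .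
    qed
    with infeasible show ?thesis by blast
  qed
qed

section \<open>Duality for the LP relaxation of b-matching\<close>

definition load :: "nat set set \<Rightarrow> (nat set \<Rightarrow> real) \<Rightarrow> nat \<Rightarrow> real" where
  "load E x v = (\<Sum>e\<in>{e\<in>E. v \<in> e}. x e)"

lemma load_add_scaled: "load E (\<lambda>e. x e + c * z e) v = load E x v + c * load E z v"
  by (simp add: load_def sum.distrib sum_distrib_left)

lemma primal_obj_add_scaled: "primal_obj E w (\<lambda>e. x e + c * z e) = primal_obj E w x + c * primal_obj E w z"
  by (simp add: primal_obj_def sum.distrib sum_distrib_left algebra_simps)

lemma finite_vset: "finite (vset n)"
  by (simp add: vset_def)

text \<open>The rows of a system \<open>A x \<le> c\<close> saying that \<open>x\<close> is feasible for LP' with objective value at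
  most \<open>D\<close>; the row \<open>Lower e\<close> is \<open>-x\<^sub>e \<le> 0\<close>.\<close>

datatype lp_row = Capacity nat | Upper "nat set" | Lower "nat set" | Objective

definition lp_rows :: "nat \<Rightarrow> nat set set \<Rightarrow> lp_row set" where
  "lp_rows n E = Capacity ` vset n \<union> Upper ` E \<union> Lower ` E \<union> {Objective}"

definition lp_coeff :: "(nat set \<Rightarrow> real) \<Rightarrow> lp_row \<Rightarrow> nat set \<Rightarrow> real" where
  "lp_coeff w k e = (case k of
     Capacity v \<Rightarrow> of_bool (v \<in> e) | Upper f \<Rightarrow> of_bool (e = f) | Lower f \<Rightarrow> - of_bool (e = f)
   | Objective \<Rightarrow> w e)"

definition lp_rhs :: "(nat \<Rightarrow> nat) \<Rightarrow> real \<Rightarrow> lp_row \<Rightarrow> real" where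
  "lp_rhs b D k = (case k of Capacity v \<Rightarrow> real (b v) | Upper f \<Rightarrow> 1 | Lower f \<Rightarrow> 0 | Objective \<Rightarrow> D)"

lemma finite_lp_rows: "finite E \<Longrightarrow> finite (lp_rows n E)"
  by (simp add: lp_rows_def vset_def)

lemma sum_lp_rows:
  assumes "finite E"
  shows "sum g (lp_rows n E) =
    (\<Sum>v\<in>vset n. g (Capacity v)) + (\<Sum>e\<in>E. g (Upper e)) + (\<Sum>e\<in>E. g (Lower e)) + g Objective"
proof -
  let ?C = "Capacity ` vset n" and ?U = "Upper ` E" and ?L = "Lower ` E"
  have fin: "finite ?C" "finite ?U" "finite ?L" using assms by (simp_all add: vset_def)
  have "sum g (lp_rows n E) = sum g (?C \<union> ?U \<union> ?L) + g Objective"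
    unfolding lp_rows_def using fin by (subst sum.union_disjoint) auto
  also have "sum g (?C \<union> ?U \<union> ?L) = sum g (?C \<union> ?U) + sum g ?L"
    using fin by (subst sum.union_disjoint) auto
  also have "sum g (?C \<union> ?U) = sum g ?C + sum g ?U"
    using fin by (subst sum.union_disjoint) auto
  finally have "sum g (lp_rows n E) = sum g ?C + sum g ?U + sum g ?L + g Objective" .
  then show ?thesis by (simp add: sum.reindex inj_on_def)
qed

locale simple_graph_on =
  fixes n :: nat and E :: "nat set set"
  assumes simple: "simple_graph n E"
begin

lemma edgeE:
  assumes "e \<in> E"
  obtains i j where "e = {i, j}" "i \<in> vset n" "j \<in> vset n" "i \<noteq> j"
  using assms simple unfolding simple_graph_def by blast

lemma edge_subset_vset: "e \<in> E \<Longrightarrow> e \<subseteq> vset n"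
  by (rule edgeE) auto

lemma finite_edges: "finite E"
proof -
  have "E \<subseteq> Pow (vset n)" using edge_subset_vset by blast
  then show ?thesis by (rule finite_subset) (simp add: finite_vset)
qed

lemma load_eq_sum_nbrs: "(\<Sum>j\<in>nbrs E v. f {v, j}) = load E f v"
  unfolding load_def
proof (rule sum.reindex_bij_betw, rule bij_betwI')
  fix e assume e: "e \<in> {e \<in> E. v \<in> e}"
  then have "e \<in> E" by simp
  then obtain i j where "e = {i, j}" "i \<noteq> j" by (rule edgeE)
  with e show "\<exists>j\<in>nbrs E v. e = {v, j}"
    by (auto simp: nbrs_def insert_commute)
qed (auto simp: nbrs_def doubleton_eq_iff)

lemma load_eq_sum_edges: "load E x v = (\<Sum>e\<in>E. of_bool (v \<in> e) * x e)"
proof -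
  have "{e\<in>E. v \<in> e} = E \<inter> {e. v \<in> e}" by auto
  then show ?thesis using finite_edges by (simp add: load_def)
qed

lemma primal_feasible_iff:
  "primal_feasible n E b x \<longleftrightarrow>
     (\<forall>v\<in>vset n. load E x v \<le> real (b v)) \<and> (\<forall>e\<in>E. 0 \<le> x e \<and> x e \<le> 1)"
  unfolding primal_feasible_def load_eq_sum_nbrs ..

lemma load_indicator: "H \<subseteq> E \<Longrightarrow> load E (\<lambda>e. of_bool (e \<in> H)) v = real (deg H v)"
proof -
  assume "H \<subseteq> E"
  then have "E \<inter> {e. v \<in> e} \<inter> {e. e \<in> H} = {e\<in>H. v \<in> e}" by auto
  then show ?thesis using finite_edges by (simp add: load_eq_sum_edges deg_def)
qed

lemma primal_obj_indicator: "H \<subseteq> E \<Longrightarrow> primal_obj E w (\<lambda>e. of_bool (e \<in> H)) = (\<Sum>e\<in>H. w e)"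
  using finite_edges by (simp add: primal_obj_def Int_absorb1 Int_def[symmetric])

lemma sum_load: "(\<Sum>v\<in>vset n. y v * load E x v) = (\<Sum>e\<in>E. x e * (\<Sum>v\<in>e. y v))"
proof -
  have "(\<Sum>v\<in>vset n. y v * load E x v) = (\<Sum>e\<in>E. \<Sum>v\<in>vset n. x e * (y v * of_bool (v \<in> e)))"
    unfolding load_eq_sum_edges sum_distrib_left by (subst sum.swap) (simp add: ac_simps)
  also have "\<dots> = (\<Sum>e\<in>E. x e * (\<Sum>v\<in>e. y v))"
  proof (rule sum.cong)
    fix e assume "e \<in> E"
    then have "vset n \<inter> {v. v \<in> e} = e" using edge_subset_vset by auto
    then show "(\<Sum>v\<in>vset n. x e * (y v * of_bool (v \<in> e))) = x e * (\<Sum>v\<in>e. y v)"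
      by (simp add: sum_distrib_left[symmetric] vset_def)
  qed simp
  finally show ?thesis .
qed

lemma duality_gap:
  "primal_obj E w x - dual_obj n E b y lam =
     (\<Sum>e\<in>E. x e * (w e + lam e + (\<Sum>v\<in>e. y v))) + (\<Sum>v\<in>vset n. y v * (real (b v) - load E x v))
     + (\<Sum>e\<in>E. lam e * (1 - x e))"
  by (simp add: primal_obj_def dual_obj_def sum_load[symmetric] sum.distrib sum_subtractf algebra_simps)

lemma dual_slack_nonneg:
  assumes "dual_feasible n E w y lam" "e \<in> E"
  shows "0 \<le> w e + lam e + (\<Sum>v\<in>e. y v)"
proof -
  obtain i j where "e = {i, j}" "i \<noteq> j" using assms(2) by (rule edgeE)
  then show ?thesis using assms unfolding dual_feasible_def by force
qed

lemma duality_gap_terms_nonneg: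
  assumes "primal_feasible n E b x" "dual_feasible n E w y lam"
  shows "0 \<le> (\<Sum>e\<in>E. x e * (w e + lam e + (\<Sum>v\<in>e. y v)))"
    and "0 \<le> (\<Sum>v\<in>vset n. y v * (real (b v) - load E x v))"
    and "0 \<le> (\<Sum>e\<in>E. lam e * (1 - x e))"
  using assms dual_slack_nonneg[OF assms(2)] unfolding primal_feasible_iff dual_feasible_def
  by (auto intro!: sum_nonneg)

lemma weak_duality:
  assumes "primal_feasible n E b x" "dual_feasible n E w y lam"
  shows "dual_obj n E b y lam \<le> primal_obj E w x"
  using duality_gap[of w x b y lam] duality_gap_terms_nonneg[OF assms] by linarith

lemma dual_zero_at_slack_vertex:
  assumes "primal_feasible n E b x" "dual_feasible n E w y lam"
    and "primal_obj E w x = dual_obj n E b y lam"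
    and "v \<in> vset n" "load E x v < real (b v)"
  shows "y v = 0"
proof -
  have terms_nonneg: "0 \<le> y u * (real (b u) - load E x u)" if "u \<in> vset n" for u
    using assms(1,2) that unfolding primal_feasible_iff dual_feasible_def by auto
  have "(\<Sum>u\<in>vset n. y u * (real (b u) - load E x u)) = 0"
    using duality_gap[of w x b y lam] duality_gap_terms_nonneg[OF assms(1,2)] assms(3) by linarith
  then have "\<forall>u\<in>vset n. y u * (real (b u) - load E x u) = 0"
    using sum_nonneg_eq_0_iff[OF finite_vset, where f = "\<lambda>u. y u * (real (b u) - load E x u)"] terms_nonneg
    by simp
  then have "y v * (real (b v) - load E x v) = 0" using assms(4) by blast
  then show ?thesis using assms(5) by simp
qed

lemma lp_row_sums:
  shows "(\<Sum>e\<in>E. lp_coeff w (Capacity v) e * x e) = load E x v"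
    and "f \<in> E \<Longrightarrow> (\<Sum>e\<in>E. lp_coeff w (Upper f) e * x e) = x f"
    and "f \<in> E \<Longrightarrow> (\<Sum>e\<in>E. lp_coeff w (Lower f) e * x e) = - x f"
    and "(\<Sum>e\<in>E. lp_coeff w Objective e * x e) = primal_obj E w x"
proof -
  have "f \<in> E \<Longrightarrow> E \<inter> {e. e = f} = {f}" for f by auto
  then show "(\<Sum>e\<in>E. lp_coeff w (Upper f) e * x e) = x f"
    and "(\<Sum>e\<in>E. lp_coeff w (Lower f) e * x e) = - x f" if "f \<in> E"
    using that finite_edges by (simp_all add: lp_coeff_def sum_negf)
qed (simp_all add: lp_coeff_def load_eq_sum_edges primal_obj_def)

lemma lp_system_iff:
  "(\<forall>k\<in>lp_rows n E. (\<Sum>e\<in>E. lp_coeff w k e * x e) \<le> lp_rhs b D k) \<longleftrightarrow>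
     primal_feasible n E b x \<and> primal_obj E w x \<le> D"
  (is "?rows \<longleftrightarrow> _")
proof
  assume rows: ?rows
  have "load E x v \<le> real (b v)" if "v \<in> vset n" for v
    using rows[rule_format, of "Capacity v"] that by (simp add: lp_rows_def lp_row_sums lp_rhs_def)
  moreover have "0 \<le> x e \<and> x e \<le> 1" if "e \<in> E" for e
    using rows[rule_format, of "Upper e"] rows[rule_format, of "Lower e"] that
    by (simp add: lp_rows_def lp_row_sums lp_rhs_def)
  moreover have "primal_obj E w x \<le> D"
    using rows[rule_format, of Objective] by (simp add: lp_rows_def lp_row_sums lp_rhs_def)
  ultimately show "primal_feasible n E b x \<and> primal_obj E w x \<le> D"
    unfolding primal_feasible_iff by blast
qed (auto simp: lp_rows_def primal_feasible_iff lp_row_sums lp_rhs_def)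

lemma primal_infeasibility_certificate:
  assumes "\<not> (\<exists>x. primal_feasible n E b x \<and> primal_obj E w x \<le> D)"
  obtains \<mu> :: "nat \<Rightarrow> real" and \<nu> :: "nat set \<Rightarrow> real" and \<tau> :: real
  where "\<forall>v\<in>vset n. 0 \<le> \<mu> v" "\<forall>e\<in>E. 0 \<le> \<nu> e" "0 \<le> \<tau>"
    and "\<forall>e\<in>E. 0 \<le> (\<Sum>v\<in>e. \<mu> v) + \<nu> e + \<tau> * w e"
    and "(\<Sum>v\<in>vset n. real (b v) * \<mu> v) + (\<Sum>e\<in>E. \<nu> e) + \<tau> * D < 0"
proof -
  have "\<not> (\<exists>x. \<forall>k\<in>lp_rows n E. (\<Sum>e\<in>E. lp_coeff w k e * x e) \<le> lp_rhs b D k)"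
    using assms lp_system_iff by blast
  from farkas_inequalities[OF finite_edges finite_lp_rows[OF finite_edges] this] obtain \<rho>
    where \<rho>_nonneg: "\<forall>k\<in>lp_rows n E. 0 \<le> \<rho> k"
      and \<rho>_cols: "\<forall>e\<in>E. (\<Sum>k\<in>lp_rows n E. \<rho> k * lp_coeff w k e) = 0"
      and \<rho>_rhs: "(\<Sum>k\<in>lp_rows n E. \<rho> k * lp_rhs b D k) < 0"
    by blast
  have "0 \<le> (\<Sum>v\<in>e. \<rho> (Capacity v)) + \<rho> (Upper e) + \<rho> Objective * w e" if "e \<in> E" for e
  proof -
    have "vset n \<inter> e = e" "E \<inter> {f. e = f} = {e}"
      using edge_subset_vset[OF that] that by auto
    then have "(\<Sum>v\<in>e. \<rho> (Capacity v)) + \<rho> (Upper e) - \<rho> (Lower e) + \<rho> Objective * w e = 0"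
      using \<rho>_cols[rule_format, OF that] finite_edges
      by (simp add: sum_lp_rows lp_coeff_def sum_negf finite_vset)
    moreover have "0 \<le> \<rho> (Lower e)" using \<rho>_nonneg that by (simp add: lp_rows_def)
    ultimately show ?thesis by linarith
  qed
  moreover have "(\<Sum>v\<in>vset n. real (b v) * \<rho> (Capacity v)) + (\<Sum>e\<in>E. \<rho> (Upper e)) + \<rho> Objective * D < 0"
    using \<rho>_rhs finite_edges by (simp add: sum_lp_rows lp_rhs_def mult.commute)
  ultimately show ?thesis
    using that[of "\<lambda>v. \<rho> (Capacity v)" "\<lambda>e. \<rho> (Upper e)" "\<rho> Objective"] \<rho>_nonneg
    by (simp add: lp_rows_def)
qed

lemma strong_duality:
  assumes "dual_optimal n E b w y lam"
  shows "\<exists>x. primal_feasible n E b x \<and> primal_obj E w x \<le> dual_obj n E b y lam"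
proof (rule ccontr)
  assume "\<not> ?thesis"
  then obtain \<mu> \<nu> \<tau> where
    \<mu>: "\<forall>v\<in>vset n. 0 \<le> \<mu> v" and \<nu>: "\<forall>e\<in>E. 0 \<le> \<nu> e" and "0 \<le> \<tau>"
    and slack: "\<forall>e\<in>E. 0 \<le> (\<Sum>v\<in>e. \<mu> v) + \<nu> e + \<tau> * w e"
    and gain: "(\<Sum>v\<in>vset n. real (b v) * \<mu> v) + (\<Sum>e\<in>E. \<nu> e) + \<tau> * dual_obj n E b y lam < 0"
    by (rule primal_infeasibility_certificate)
  have "0 \<le> (\<Sum>v\<in>vset n. real (b v) * \<mu> v) + (\<Sum>e\<in>E. \<nu> e)"
    using \<mu> \<nu> by (intro add_nonneg_nonneg sum_nonneg) auto
  with gain \<open>0 \<le> \<tau>\<close> have "0 < \<tau>" by (cases "\<tau> = 0") auto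
  text \<open>Scaling the certificate by \<open>1/\<tau>\<close> gives a dual solution beating the optimum.\<close>
  have "dual_feasible n E w (\<lambda>v. \<mu> v / \<tau>) (\<lambda>e. \<nu> e / \<tau>)"
    unfolding dual_feasible_def
  proof (intro conjI allI impI ballI)
    fix i j assume ij: "{i, j} \<in> E"
    obtain i' j' where "{i, j} = {i', j'}" "i' \<noteq> j'" using ij by (rule edgeE)
    then have "i \<noteq> j" by (auto simp: doubleton_eq_iff)
    then have "0 \<le> (\<mu> i + \<mu> j + \<nu> {i, j}) / \<tau> + w {i, j}"
      using slack[rule_format, OF ij] \<open>0 < \<tau>\<close> by (simp add: field_simps)
    moreover have "(\<mu> i + \<mu> j + \<nu> {i, j}) / \<tau> = \<mu> i / \<tau> + \<mu> j / \<tau> + \<nu> {i, j} / \<tau>"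
      by (simp add: add_divide_distrib)
    ultimately show "- (\<mu> i / \<tau>) - \<mu> j / \<tau> \<le> w {i, j} + \<nu> {i, j} / \<tau>"
      by linarith
  qed (use \<mu> \<nu> \<open>0 < \<tau>\<close> in auto)
  moreover have "dual_obj n E b y lam < dual_obj n E b (\<lambda>v. \<mu> v / \<tau>) (\<lambda>e. \<nu> e / \<tau>)"
  proof -
    have "dual_obj n E b (\<lambda>v. \<mu> v / \<tau>) (\<lambda>e. \<nu> e / \<tau>)
        = - ((\<Sum>v\<in>vset n. real (b v) * \<mu> v) + (\<Sum>e\<in>E. \<nu> e)) / \<tau>"
      unfolding dual_obj_def times_divide_eq_right sum_divide_distrib[symmetric]
      by (simp add: diff_divide_distrib)
    moreover have "dual_obj n E b y lam * \<tau> < - ((\<Sum>v\<in>vset n. real (b v) * \<mu> v) + (\<Sum>e\<in>E. \<nu> e))"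
      using gain by (simp add: mult.commute)
    ultimately show ?thesis using \<open>0 < \<tau>\<close> by (simp add: less_divide_eq)
  qed
  ultimately show False using assms unfolding dual_optimal_def by force
qed

lemma integral_primal_feasible_bmatching:
  assumes "primal_feasible n E b x" "\<forall>e\<in>E. x e = 0 \<or> x e = 1"
  shows "is_bmatching n E b {e\<in>E. x e = 1}"
    and "primal_obj E w x = primal_obj E w (\<lambda>e. of_bool (e \<in> {e\<in>E. x e = 1}))"
proof -
  have x_eq: "x e = of_bool (e \<in> {e\<in>E. x e = 1})" if "e \<in> E" for e
    using assms(2) that by auto
  then have "load E x v = load E (\<lambda>e. of_bool (e \<in> {e\<in>E. x e = 1})) v" for v
    unfolding load_def by (intro sum.cong) auto
  moreover have "{e\<in>E. x e = 1} \<subseteq> E" by auto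
  ultimately have "load E x v = real (deg {e\<in>E. x e = 1} v)" for v
    using load_indicator by presburger
  then show "is_bmatching n E b {e\<in>E. x e = 1}"
    using assms(1) unfolding primal_feasible_iff is_bmatching_def by auto
  show "primal_obj E w x = primal_obj E w (\<lambda>e. of_bool (e \<in> {e\<in>E. x e = 1}))"
    unfolding primal_obj_def using x_eq by (intro sum.cong) auto
qed

lemma min_bmatching_primal_optimal:
  assumes H: "is_min_bmatching n E b w H"
    and dual: "dual_optimal n E b w y lam"
    and integral: "no_fractional_solution n E b w"
  shows "primal_optimal n E b w (\<lambda>e. of_bool (e \<in> H))"
    and "primal_obj E w (\<lambda>e. of_bool (e \<in> H)) = dual_obj n E b y lam"
proof -
  have weak: "dual_obj n E b y lam \<le> primal_obj E w x" if "primal_feasible n E b x" for x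
    using weak_duality[OF that] dual by (simp add: dual_optimal_def)
  obtain x0 where x0: "primal_feasible n E b x0" "primal_obj E w x0 \<le> dual_obj n E b y lam"
    using strong_duality[OF dual] by blast
  then have "primal_optimal n E b w x0"
    unfolding primal_optimal_def using weak by force
  then have "\<forall>e\<in>E. x0 e = 0 \<or> x0 e = 1"
    using integral unfolding no_fractional_solution_def by blast
  note M = integral_primal_feasible_bmatching[OF x0(1) this]
  have HE: "H \<subseteq> E" using H by (simp add: is_min_bmatching_def is_bmatching_def)
  have H_feasible: "primal_feasible n E b (\<lambda>e. of_bool (e \<in> H))"
    using H unfolding primal_feasible_iff load_indicator[OF HE]
    by (auto simp: is_min_bmatching_def is_bmatching_def)
  have "primal_obj E w (\<lambda>e. of_bool (e \<in> H)) = (\<Sum>e\<in>H. w e)"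
    by (rule primal_obj_indicator[OF HE])
  also have "\<dots> \<le> (\<Sum>e\<in>{e\<in>E. x0 e = 1}. w e)"
    using H M(1) unfolding is_min_bmatching_def by blast
  also have "\<dots> = primal_obj E w x0"
    unfolding M(2) by (rule primal_obj_indicator[symmetric]) auto
  finally have "primal_obj E w (\<lambda>e. of_bool (e \<in> H)) \<le> primal_obj E w x0" .
  with x0(2) weak[OF H_feasible]
  show "primal_obj E w (\<lambda>e. of_bool (e \<in> H)) = dual_obj n E b y lam" by linarith
  then show "primal_optimal n E b w (\<lambda>e. of_bool (e \<in> H))"
    using H_feasible weak unfolding primal_optimal_def by simp
qed

end

section \<open>Shifting a b-matching along an alternating walk\<close>

definition walk_edge :: "nat list \<Rightarrow> nat \<Rightarrow> nat set" where
  "walk_edge P r = {P ! r, P ! Suc r}"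

definition walk_mult :: "nat list \<Rightarrow> nat set \<Rightarrow> nat" where
  "walk_mult P e = card {r. Suc r < length P \<and> walk_edge P r = e}"

definition toggle_sign :: "'a set \<Rightarrow> 'a \<Rightarrow> real" where
  "toggle_sign H e = (if e \<in> H then -1 else 1)"

lemma walk_mult_eq_sum: "real (walk_mult P e) = (\<Sum>r<length P - 1. of_bool (walk_edge P r = e))"
proof -
  have "{r. Suc r < length P \<and> walk_edge P r = e} = {..<length P - 1} \<inter> {r. walk_edge P r = e}"
    by auto
  then show ?thesis by (simp add: walk_mult_def)
qed

lemma walk_mult_le: "walk_mult P e \<le> length P - 1"
proof -
  have "walk_mult P e \<le> card {..<length P - 1}"
    unfolding walk_mult_def by (rule card_mono) auto
  then show ?thesis by simp
qed

lemma walk_mult_pos: "Suc r < length P \<Longrightarrow> 0 < walk_mult P (walk_edge P r)"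
  unfolding walk_mult_def by (subst card_gt_0_iff) (auto intro: finite_subset[of _ "{..<length P}"])

lemma sum_alternating_telescope:
  fixes g s :: "nat \<Rightarrow> real"
  assumes "\<forall>r<m. s (Suc r) = - s r"
  shows "(\<Sum>r<Suc m. (g r + g (Suc r)) * s r) = g 0 * s 0 + g (Suc m) * s m"
  using assms
proof (induction m)
  case (Suc m)
  then have "(\<Sum>r<Suc (Suc m). (g r + g (Suc r)) * s r)
      = g 0 * s 0 + g (Suc m) * s m + (g (Suc m) + g (Suc (Suc m))) * s (Suc m)"
    by simp
  also have "\<dots> = g 0 * s 0 + g (Suc (Suc m)) * s (Suc m)"
    using Suc.prems by (simp add: algebra_simps)
  finally show ?case .
qed (simp add: algebra_simps)

lemma alternating_path_edges: "alternating_path E H P \<Longrightarrow> Suc r < length P \<Longrightarrow> walk_edge P r \<in> E"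
  unfolding alternating_path_def walk_edge_def by blast

lemma alternating_path_toggle_sign:
  assumes "alternating_path E H P" "Suc (Suc r) < length P"
  shows "toggle_sign H (walk_edge P (Suc r)) = - toggle_sign H (walk_edge P r)"
  using assms unfolding alternating_path_def toggle_sign_def walk_edge_def by auto

context simple_graph_on
begin

lemma sum_walk_mult:
  fixes f c :: "nat set \<Rightarrow> real"
  assumes "\<forall>r. Suc r < length P \<longrightarrow> walk_edge P r \<in> E"
  shows "(\<Sum>e\<in>E. f e * (c e * walk_mult P e)) = (\<Sum>r<length P - 1. f (walk_edge P r) * c (walk_edge P r))"
proof -
  have "(\<Sum>e\<in>E. f e * (c e * walk_mult P e))
      = (\<Sum>e\<in>E. \<Sum>r<length P - 1. f e * c e * of_bool (walk_edge P r = e))"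
    unfolding walk_mult_eq_sum by (simp only: sum_distrib_left mult.assoc)
  also have "\<dots> = (\<Sum>r<length P - 1. \<Sum>e\<in>E. f e * c e * of_bool (walk_edge P r = e))"
    by (rule sum.swap)
  also have "\<dots> = (\<Sum>r<length P - 1. f (walk_edge P r) * c (walk_edge P r))"
  proof (rule sum.cong)
    fix r assume "r \<in> {..<length P - 1}"
    then have "E \<inter> {e. walk_edge P r = e} = {walk_edge P r}" using assms by auto
    then show "(\<Sum>e\<in>E. f e * c e * of_bool (walk_edge P r = e)) = f (walk_edge P r) * c (walk_edge P r)"
      using finite_edges by simp
  qed simp
  finally show ?thesis .
qed

lemma load_toggle_walk:
  assumes P: "alternating_path E H P" "length P = Suc (Suc m)"
  shows "load E (\<lambda>e. toggle_sign H e * walk_mult P e) v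
    = of_bool (P ! 0 = v) * toggle_sign H (walk_edge P 0)
      + of_bool (P ! Suc m = v) * toggle_sign H (walk_edge P m)"
proof -
  let ?g = "\<lambda>r. of_bool (P ! r = v) :: real" and ?s = "\<lambda>r. toggle_sign H (walk_edge P r)"
  have "load E (\<lambda>e. toggle_sign H e * walk_mult P e) v = (\<Sum>r<Suc m. of_bool (v \<in> walk_edge P r) * ?s r)"
    using sum_walk_mult[of P "\<lambda>e. of_bool (v \<in> e)" "toggle_sign H"] alternating_path_edges[OF P(1)] P(2)
    by (simp add: load_eq_sum_edges)
  also have "\<dots> = (\<Sum>r<Suc m. (?g r + ?g (Suc r)) * ?s r)"
  proof (rule sum.cong)
    fix r assume "r \<in> {..<Suc m}"
    then have "P ! r \<noteq> P ! Suc r" using P unfolding alternating_path_def by auto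
    then show "of_bool (v \<in> walk_edge P r) * ?s r = (?g r + ?g (Suc r)) * ?s r"
      by (auto simp: walk_edge_def)
  qed simp
  also have "\<dots> = ?g 0 * ?s 0 + ?g (Suc m) * ?s m"
    by (rule sum_alternating_telescope) (use alternating_path_toggle_sign[OF P(1)] P(2) in auto)
  finally show ?thesis .
qed

lemma objective_toggle_walk:
  assumes P: "alternating_path E H P" "length P = Suc (Suc m)"
    and tight: "\<forall>r<Suc m. w (walk_edge P r) + y (P ! r) + y (P ! Suc r) = 0"
  shows "(\<Sum>e\<in>E. w e * (toggle_sign H e * walk_mult P e))
    = - (y (P ! 0) * toggle_sign H (walk_edge P 0) + y (P ! Suc m) * toggle_sign H (walk_edge P m))"
proof -
  let ?s = "\<lambda>r. toggle_sign H (walk_edge P r)"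
  have "(\<Sum>e\<in>E. w e * (toggle_sign H e * walk_mult P e)) = (\<Sum>r<Suc m. w (walk_edge P r) * ?s r)"
    using sum_walk_mult[of P w "toggle_sign H"] alternating_path_edges[OF P(1)] P(2) by simp
  also have "\<dots> = (\<Sum>r<Suc m. - ((y (P ! r) + y (P ! Suc r)) * ?s r))"
  proof (rule sum.cong)
    fix r assume "r \<in> {..<Suc m}"
    then have "w (walk_edge P r) = - (y (P ! r) + y (P ! Suc r))" using tight by force
    then show "w (walk_edge P r) * ?s r = - ((y (P ! r) + y (P ! Suc r)) * ?s r)"
      by (simp only: minus_mult_left)
  qed simp
  also have "\<dots> = - (y (P ! 0) * ?s 0 + y (P ! Suc m) * ?s m)"
    unfolding sum_negf
    by (subst sum_alternating_telescope) (use alternating_path_toggle_sign[OF P(1)] P(2) in auto)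
  finally show ?thesis .
qed

lemma toggle_walk_feasible:
  assumes H: "is_bmatching n E b H"
    and P: "alternating_path E H P" "length P = Suc (Suc m)"
    and ends: "P ! 0 \<in> unsat n b H" "P ! Suc m \<in> unsat n b H"
    and \<epsilon>: "0 \<le> \<epsilon>" "\<epsilon> * real (length P) \<le> 1"
  shows "primal_feasible n E b (\<lambda>e. of_bool (e \<in> H) + \<epsilon> * (toggle_sign H e * walk_mult P e))"
  unfolding primal_feasible_iff
proof (intro conjI ballI)
  have HE: "H \<subseteq> E" using H by (simp add: is_bmatching_def)
  fix v assume v: "v \<in> vset n"
  let ?bd = "of_bool (P ! 0 = v) * toggle_sign H (walk_edge P 0)
      + of_bool (P ! Suc m = v) * toggle_sign H (walk_edge P m)"
  have load: "load E (\<lambda>e. of_bool (e \<in> H) + \<epsilon> * (toggle_sign H e * walk_mult P e)) v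
      = real (deg H v) + \<epsilon> * ?bd"
    by (simp add: load_add_scaled load_indicator[OF HE] load_toggle_walk[OF P])
  show "load E (\<lambda>e. of_bool (e \<in> H) + \<epsilon> * (toggle_sign H e * walk_mult P e)) v \<le> real (b v)"
  proof (cases "v = P ! 0 \<or> v = P ! Suc m")
    case True
    then have "deg H v + 1 \<le> b v" using ends by (auto simp: unsat_def)
    moreover have "\<epsilon> * ?bd \<le> \<epsilon> * 2"
      using \<epsilon>(1) by (intro mult_left_mono) (auto simp: toggle_sign_def)
    moreover have "\<epsilon> * 2 \<le> \<epsilon> * real (length P)"
      using P(2) \<epsilon>(1) by (intro mult_left_mono) auto
    ultimately show ?thesis unfolding load using \<epsilon>(2) by linarith
  next
    case False
    then show ?thesis using H v unfolding load by (auto simp: is_bmatching_def)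
  qed
next
  fix e
  have "\<epsilon> * walk_mult P e \<le> \<epsilon> * real (length P)"
    using walk_mult_le[of P e] \<epsilon>(1) by (intro mult_left_mono) auto
  then show "0 \<le> of_bool (e \<in> H) + \<epsilon> * (toggle_sign H e * walk_mult P e)"
    and "of_bool (e \<in> H) + \<epsilon> * (toggle_sign H e * walk_mult P e) \<le> 1"
    using \<epsilon> by (auto simp: toggle_sign_def)
qed

lemma tight_path_fractional_optimum:
  assumes H: "is_bmatching n E b H" and opt: "primal_optimal n E b w (\<lambda>e. of_bool (e \<in> H))"
    and P: "alternating_path E H P" "2 \<le> length P"
    and ends: "hd P \<in> unsat n b H" "last P \<in> unsat n b H"
    and y_ends: "y (hd P) = 0" "y (last P) = 0"
    and tight: "\<forall>r. Suc r < length P \<longrightarrow> w (walk_edge P r) + y (P ! r) + y (P ! Suc r) = 0"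
  shows "\<exists>x. primal_optimal n E b w x \<and> x (walk_edge P 0) \<noteq> 0 \<and> x (walk_edge P 0) \<noteq> 1"
proof -
  obtain m where len: "length P = Suc (Suc m)"
    using P(2) by (metis add_2_eq_Suc le_Suc_ex)
  have "hd P = P ! 0" using len by (cases P) auto
  have "last P = P ! Suc m" using len last_conv_nth[of P] by (cases "P = []") auto
  define \<epsilon> where "\<epsilon> = 1 / real (length P)"
  define x where "x = (\<lambda>e. of_bool (e \<in> H) + \<epsilon> * (toggle_sign H e * walk_mult P e))"
  have "0 < \<epsilon>" "\<epsilon> * real (length P) = 1" using len by (simp_all add: \<epsilon>_def)
  have "primal_feasible n E b x"
    unfolding x_def using \<open>0 < \<epsilon>\<close> \<open>\<epsilon> * _ = 1\<close> ends \<open>hd P = _\<close> \<open>last P = _\<close>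
    by (intro toggle_walk_feasible[OF H P(1) len]) auto
  moreover have "primal_obj E w x = primal_obj E w (\<lambda>e. of_bool (e \<in> H))"
    using objective_toggle_walk[OF P(1) len, of w y] tight y_ends len \<open>hd P = _\<close> \<open>last P = _\<close>
    by (simp add: x_def primal_obj_add_scaled primal_obj_def)
  ultimately have "primal_optimal n E b w x"
    using opt unfolding primal_optimal_def by simp
  moreover have "0 < \<epsilon> * walk_mult P (walk_edge P 0)" "\<epsilon> * walk_mult P (walk_edge P 0) < 1"
  proof -
    show "0 < \<epsilon> * walk_mult P (walk_edge P 0)" using \<open>0 < \<epsilon>\<close> walk_mult_pos[of 0 P] len by simp
    have "walk_mult P (walk_edge P 0) < length P" using walk_mult_le[of P] len
      by (simp add: less_Suc_eq_le)
    then have "real (walk_mult P (walk_edge P 0)) < real (length P)" by simp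
    then show "\<epsilon> * walk_mult P (walk_edge P 0) < 1"
      using \<open>0 < \<epsilon>\<close> \<open>\<epsilon> * _ = 1\<close> by (metis mult_strict_left_mono)
  qed
  then have "x (walk_edge P 0) \<noteq> 0 \<and> x (walk_edge P 0) \<noteq> 1"
    using walk_mult_pos[of 0 P] len unfolding x_def toggle_sign_def
    by (cases "walk_edge P 0 \<in> H") auto
  ultimately show ?thesis by blast
qed

end

theorem lemma6:
  fixes n :: nat and E :: "nat set set" and w :: "nat set \<Rightarrow> real" and b :: "nat \<Rightarrow> nat"
    and H :: "nat set set" and y :: "nat \<Rightarrow> real" and lam :: "nat set \<Rightarrow> real"
    and P :: "nat list"
  assumes "simple_graph n E"
    and "\<forall>e \<in> E. w e \<le> 0"
    and "\<forall>i \<in> vset n. 0 < b i \<and> b i \<le> deg E i"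
    and "is_min_bmatching n E b w H"
    and "dual_optimal n E b w y lam"
    and "no_fractional_solution n E b w"
    and "alternating_path E H P"
    and "2 \<le> length P"
    and "hd P \<in> unsat n b H" and "last P \<in> unsat n b H"
  shows "\<exists>r. Suc r < length P \<and> \<bar>w {P ! r, P ! Suc r} + y (P ! r) + y (P ! Suc r)\<bar> > 0"
proof (rule ccontr)
  assume "\<not> ?thesis"
  then have tight: "\<forall>r. Suc r < length P \<longrightarrow> w (walk_edge P r) + y (P ! r) + y (P ! Suc r) = 0"
    by (auto simp: walk_edge_def)
  interpret simple_graph_on n E using assms(1) by (rule simple_graph_on.intro)
  have H: "is_bmatching n E b H" using assms(4) by (simp add: is_min_bmatching_def)
  note opt = min_bmatching_primal_optimal[OF assms(4-6)]
  have y_unsat: "y v = 0" if "v \<in> unsat n b H" for v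
  proof (rule dual_zero_at_slack_vertex[OF _ _ opt(2)])
    show "primal_feasible n E b (\<lambda>e. of_bool (e \<in> H))" using opt(1) by (simp add: primal_optimal_def)
    show "dual_feasible n E w y lam" using assms(5) by (simp add: dual_optimal_def)
    show "v \<in> vset n" "load E (\<lambda>e. of_bool (e \<in> H)) v < real (b v)"
      using that H by (auto simp: unsat_def load_indicator is_bmatching_def)
  qed
  obtain x where "primal_optimal n E b w x" "x (walk_edge P 0) \<noteq> 0" "x (walk_edge P 0) \<noteq> 1"
    using tight_path_fractional_optimum[OF H opt(1) assms(7-10)] y_unsat assms(9,10) tight
    by blast
  moreover have "walk_edge P 0 \<in> E" using alternating_path_edges[OF assms(7)] assms(8) by simp
  ultimately show False using assms(6) unfolding no_fractional_solution_def by blast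
qed

end
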